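(* Let $\mathcal{U}\subseteq\mathcal{E}$ be any dead-ending universe. Then $\mathcal{D}(\mathcal{U}\cap\mathcal{L})=\mathcal{U}$.
   Context: Games are finite partizan games. A universe is a set of games closed under options, disjunctive sums, conjugates (swapping roles of Left and Right), and forming $\{\mathscr{G}^L\mid\mathscr{G}^R\}$ from nonempty finite subsets of it. $\mathcal{D}(\mathcal{A})$ denotes the smallest universe containing $\mathcal{A}$. A Left (Right) end has no Left (Right) option; a Left (Right) dead-end is a game all of whose subpositions are Left (Right) ends; $\mathcal{L}$ is the set of Left dead-ends. $\mathcal{E}$ is the set of games every end-subposition of which is a (Left or Right) dead-end; a universe contained in $\mathcal{E}$ is dead-ending. *)

theory Defs
  imports Main "HOL-Library.FSet"
begin

datatype game = Game (lefts: "game fset") (rights: "game fset")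

lemma size_lefts: "x |\<in>| lefts g \<Longrightarrow> size x < size g"
proof (cases g)
  case (Game L R)
  assume "x |\<in>| lefts g"
  then have "x \<in> fset L" using Game by simp
  then have "Suc (size x) \<le> (\<Sum>y\<in>fset L. Suc (size y))"
    by (intro member_le_sum) auto
  then show ?thesis using Game by simp
qed

lemma size_rights: "x |\<in>| rights g \<Longrightarrow> size x < size g"
proof (cases g)
  case (Game L R)
  assume "x |\<in>| rights g"
  then have "x \<in> fset R" using Game by simp
  then have "Suc (size x) \<le> (\<Sum>y\<in>fset R. Suc (size y))"
    by (intro member_le_sum) auto
  then show ?thesis using Game by simp
qed

function gsum :: "game \<Rightarrow> game \<Rightarrow> game" where
  "gsum g h = Game
     ((\<lambda>x. gsum x h) |`| lefts g |\<union>| (\<lambda>y. gsum g y) |`| lefts h)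
     ((\<lambda>x. gsum x h) |`| rights g |\<union>| (\<lambda>y. gsum g y) |`| rights h)"
  by auto
termination
  by (relation "measure (\<lambda>(g, h). size g + size h)")
     (auto dest: size_lefts size_rights)

primrec conjugate :: "game \<Rightarrow> game" where
  "conjugate (Game L R) = Game (conjugate |`| R) (conjugate |`| L)"

definition is_option :: "game \<Rightarrow> game \<Rightarrow> bool" where
  "is_option x g \<longleftrightarrow> x |\<in>| lefts g \<or> x |\<in>| rights g"

inductive subpos :: "game \<Rightarrow> game \<Rightarrow> bool" where
  refl: "subpos g g"
| step: "subpos h g \<Longrightarrow> is_option x h \<Longrightarrow> subpos x g"

definition universe :: "game set \<Rightarrow> bool" where
  "universe U \<longleftrightarrow>
     (\<forall>g\<in>U. \<forall>x. is_option x g \<longrightarrow> x \<in> U) \<and>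
     (\<forall>g\<in>U. \<forall>h\<in>U. gsum g h \<in> U) \<and>
     (\<forall>g\<in>U. conjugate g \<in> U) \<and>
     (\<forall>A B. A \<noteq> {||} \<and> B \<noteq> {||} \<and> fset A \<subseteq> U \<and> fset B \<subseteq> U \<longrightarrow> Game A B \<in> U)"

definition univ_closure :: "game set \<Rightarrow> game set" ("\<D>") where
  "\<D> A = \<Inter> {U. universe U \<and> A \<subseteq> U}"

definition left_end :: "game \<Rightarrow> bool" where
  "left_end g \<longleftrightarrow> lefts g = {||}"

definition right_end :: "game \<Rightarrow> bool" where
  "right_end g \<longleftrightarrow> rights g = {||}"

definition left_dead_end :: "game \<Rightarrow> bool" where
  "left_dead_end g \<longleftrightarrow> (\<forall>h. subpos h g \<longrightarrow> left_end h)"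

definition right_dead_end :: "game \<Rightarrow> bool" where
  "right_dead_end g \<longleftrightarrow> (\<forall>h. subpos h g \<longrightarrow> right_end h)"

definition Ldead :: "game set" where
  "Ldead = {g. left_dead_end g}"

definition Edead :: "game set" where
  "Edead = {g. \<forall>h. subpos h g \<longrightarrow> (left_end h \<or> right_end h) \<longrightarrow>
                    left_dead_end h \<or> right_dead_end h}"

definition dead_ending :: "game set \<Rightarrow> bool" where
  "dead_ending U \<longleftrightarrow> universe U \<and> U \<subseteq> Edead"

end

theory Submission
  imports Defs
begin

text \<open>A game with both a Left and a Right option is built from its options by the constructor
under which every universe is closed, so by induction a universe containing the ends of \<open>U\<close>
contains \<open>U\<close>. In a dead-ending universe an end is a Left dead-end, hence in \<open>U \<inter> Ldead\<close>,
or a Right dead-end, hence the conjugate of a member of \<open>U \<inter> Ldead\<close>.\<close>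

lemma lefts_conjugate [simp]: "lefts (conjugate g) = conjugate |`| rights g"
  by (cases g) simp

lemma rights_conjugate [simp]: "rights (conjugate g) = conjugate |`| lefts g"
  by (cases g) simp

lemma conjugate_conjugate [simp]: "conjugate (conjugate g) = g"
  by (induction g) (auto simp: fset.map_comp intro: fset.map_ident_strong)

lemma subpos_conjugateE:
  assumes "subpos h (conjugate g)"
  obtains h' where "subpos h' g" and "h = conjugate h'"
  using assms
proof (induction h "conjugate g" arbitrary: thesis rule: subpos.induct)
  case refl
  then show ?case using subpos.refl by blast
next
  case (step h x)
  then obtain h' where "subpos h' g" "h = conjugate h'" by blast
  moreover from step.hyps(3) this(2) obtain y where "is_option y h'" "x = conjugate y"
    by (cases h') (auto simp: is_option_def)
  ultimately show ?case using step.prems subpos.step by blast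
qed

lemma left_dead_end_conjugate: "right_dead_end g \<Longrightarrow> left_dead_end (conjugate g)"
  unfolding left_dead_end_def right_dead_end_def left_end_def right_end_def
proof (intro allI impI)
  fix h assume "\<forall>h. subpos h g \<longrightarrow> rights h = {||}" and "subpos h (conjugate g)"
  then show "lefts h = {||}" by (elim subpos_conjugateE) simp
qed

lemma universe_option: "universe U \<Longrightarrow> g \<in> U \<Longrightarrow> is_option x g \<Longrightarrow> x \<in> U"
  unfolding universe_def by (elim conjE) blast

lemma universe_conjugate: "universe U \<Longrightarrow> g \<in> U \<Longrightarrow> conjugate g \<in> U"
  unfolding universe_def by (elim conjE) blast

lemma universe_Game:
  "universe U \<Longrightarrow> A \<noteq> {||} \<Longrightarrow> B \<noteq> {||} \<Longrightarrow> fset A \<subseteq> U \<Longrightarrow> fset B \<subseteq> U \<Longrightarrow> Game A B \<in> U"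
  unfolding universe_def by (elim conjE) blast

lemma univ_closure_subset: "universe U \<Longrightarrow> A \<subseteq> U \<Longrightarrow> \<D> A \<subseteq> U"
  unfolding univ_closure_def by blast

lemma subset_univ_closureI: "(\<And>V. universe V \<Longrightarrow> A \<subseteq> V \<Longrightarrow> B \<subseteq> V) \<Longrightarrow> B \<subseteq> \<D> A"
  unfolding univ_closure_def by blast

lemma Edead_end_dead_end:
  "g \<in> Edead \<Longrightarrow> left_end g \<or> right_end g \<Longrightarrow> left_dead_end g \<or> right_dead_end g"
  unfolding Edead_def using subpos.refl by blast

lemma dead_ending_end_cases:
  assumes "dead_ending U" and "g \<in> U" and "left_end g \<or> right_end g"
  shows "g \<in> U \<inter> Ldead \<or> conjugate g \<in> U \<inter> Ldead"
proof -
  have U: "universe U" and "g \<in> Edead" using assms(1,2) unfolding dead_ending_def by auto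
  with assms(3) consider "left_dead_end g" | "right_dead_end g" by (blast dest: Edead_end_dead_end)
  then show ?thesis
  proof cases
    case 1
    then show ?thesis using assms(2) unfolding Ldead_def by blast
  next
    case 2
    then have "left_dead_end (conjugate g)" by (rule left_dead_end_conjugate)
    then show ?thesis using universe_conjugate[OF U assms(2)] unfolding Ldead_def by blast
  qed
qed

lemma dead_ending_subset_universe:
  assumes "dead_ending U" and "universe V" and "U \<inter> Ldead \<subseteq> V"
  shows "U \<subseteq> V"
proof
  fix g assume "g \<in> U"
  then show "g \<in> V"
  proof (induction g)
    case (Game L R)
    show ?case
    proof (cases "L = {||} \<or> R = {||}")
      case False
      have "is_option x (Game L R) \<Longrightarrow> x \<in> U" for x
        using assms(1) Game.prems unfolding dead_ending_def by (blast intro: universe_option)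
      then have "fset L \<subseteq> V" "fset R \<subseteq> V"
        using Game.IH unfolding is_option_def by auto
      with False show ?thesis by (blast intro: universe_Game[OF assms(2)])
    next
      case True
      then have "left_end (Game L R) \<or> right_end (Game L R)"
        by (simp add: left_end_def right_end_def)
      then have "Game L R \<in> U \<inter> Ldead \<or> conjugate (Game L R) \<in> U \<inter> Ldead"
        by (rule dead_ending_end_cases[OF assms(1) Game.prems])
      then show ?thesis
        using assms(3) universe_conjugate[OF assms(2), of "conjugate (Game L R)"]
        by (metis conjugate_conjugate subsetD)
    qed
  qed
qed

theorem mainTheorem10:
  assumes "universe U" and "U \<subseteq> Edead"
  shows "\<D> (U \<inter> Ldead) = U"
proof
  show "\<D> (U \<inter> Ldead) \<subseteq> U" using assms(1) by (rule univ_closure_subset) blast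
  have "dead_ending U" using assms unfolding dead_ending_def ..
  show "U \<subseteq> \<D> (U \<inter> Ldead)"
  proof (rule subset_univ_closureI)
    fix V assume "universe V" and "U \<inter> Ldead \<subseteq> V"
    with \<open>dead_ending U\<close> show "U \<subseteq> V" by (rule dead_ending_subset_universe)
  qed
qed

end
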